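(* Let $S$ be a ubiquitously dense subset of $[0,\infty)$ with $0\in S$, and put $\kappa=\operatorname{card}(S)$. Let $X$ be a discrete topological space with $\operatorname{card}(X)\le\kappa$, let $d\in\mathrm{Met}(X)$ and $\epsilon\in(0,\infty)$. Then there exists $e\in\mathrm{Met}(X;S)$ such that: (1) $\mathcal{D}_X(d,e)\le\epsilon$; (2) $e$ is uniformly discrete; (3) $e(x,y)<e(x,z)+e(z,y)$ for all pairwise distinct $x,y,z\in X$; (4) $e$ is strongly rigid.
   Context: A subset $S$ of a topological space $Y$ is ubiquitously dense if $\operatorname{card}(U\cap S)=\operatorname{card}(S)$ for every non-empty open $U\subseteq Y$. For a topological space $X$ and $S\subseteq[0,\infty)$ with $0\in S$, $\mathrm{Met}(X;S)$ is the set of metrics on $X$ with values in $S$ generating the topology of $X$, and $\mathrm{Met}(X)=\mathrm{Met}(X;[0,\infty))$; $\mathcal{D}_X(d,e)=\sup_{x,y\in X}|d(x,y)-e(x,y)|$. A metric $e$ is uniformly discrete if there is $c>0$ with $c<e(x,y)$ for all distinct $x,y$. A metric $e$ is strongly rigid if $e(x,y)=e(u,v)\neq0$ implies $\{x,y\}=\{u,v\}$. *)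

theory Defs
  imports "HOL-Analysis.Analysis" "HOL-Library.Equipollence"
begin

definition ubiquitously_dense :: "'a topology \<Rightarrow> 'a set \<Rightarrow> bool" where
  "ubiquitously_dense Y S \<longleftrightarrow> S \<subseteq> topspace Y \<and>
     (\<forall>U. openin Y U \<and> U \<noteq> {} \<longrightarrow> U \<inter> S \<approx> S)"

definition Met :: "'a topology \<Rightarrow> real set \<Rightarrow> ('a \<Rightarrow> 'a \<Rightarrow> real) set" where
  "Met X S = {d.
     (\<forall>x\<in>topspace X. \<forall>y\<in>topspace X.
        d x y \<in> S \<and> 0 \<le> d x y \<and> (d x y = 0 \<longleftrightarrow> x = y) \<and> d x y = d y x) \<and>
     (\<forall>x\<in>topspace X. \<forall>y\<in>topspace X. \<forall>z\<in>topspace X. d x y \<le> d x z + d z y) \<and>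
     (\<forall>U. openin X U \<longleftrightarrow>
        U \<subseteq> topspace X \<and>
        (\<forall>x\<in>U. \<exists>r>0. \<forall>y\<in>topspace X. d x y < r \<longrightarrow> y \<in> U))}"

definition metric_dist_sup :: "'a topology \<Rightarrow> ('a \<Rightarrow> 'a \<Rightarrow> real) \<Rightarrow> ('a \<Rightarrow> 'a \<Rightarrow> real) \<Rightarrow> ereal" where
  "metric_dist_sup X d e =
     (SUP p\<in>topspace X \<times> topspace X. ereal \<bar>d (fst p) (snd p) - e (fst p) (snd p)\<bar>)"

definition uniformly_discrete :: "'a set \<Rightarrow> ('a \<Rightarrow> 'a \<Rightarrow> real) \<Rightarrow> bool" where
  "uniformly_discrete A e \<longleftrightarrow> (\<exists>c>0. \<forall>x\<in>A. \<forall>y\<in>A. x \<noteq> y \<longrightarrow> c < e x y)"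

definition strongly_rigid :: "'a set \<Rightarrow> ('a \<Rightarrow> 'a \<Rightarrow> real) \<Rightarrow> bool" where
  "strongly_rigid A e \<longleftrightarrow> (\<forall>x\<in>A. \<forall>y\<in>A. \<forall>u\<in>A. \<forall>v\<in>A.
      e x y = e u v \<and> e x y \<noteq> 0 \<longrightarrow> {x, y} = {u, v})"

end

theory Submission
  imports Defs
begin

text \<open>Fix \<open>\<delta> = \<epsilon>/2\<close> and cut \<open>[0,\<infinity>)\<close> into cells of width \<open>\<delta>/3\<close>. For distinct \<open>x, y\<close> let
  \<open>e(x,y)\<close> lie in the first cell beyond \<open>d(x,y) + \<delta>\<close>; then \<open>d + \<delta> < e < d + 2\<delta>\<close>, which
  makes \<open>e\<close> uniformly discrete, \<open>\<epsilon>\<close>-close to \<open>d\<close> and strictly subadditive on triangles.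
  Since \<open>S\<close> is ubiquitously dense, every cell meets \<open>S\<close> in a set of size \<open>|S| = |S \<times> S|\<close>,
  so inside each cell the value can be chosen injectively in the unordered pair \<open>{x, y}\<close>
  (coded by an injection of the points into \<open>S\<close>). Different cells are disjoint, so
  \<open>e\<close> is strongly rigid.\<close>

lemma Times_self_eqpoll: "infinite (S :: 'b set) \<Longrightarrow> S \<times> S \<approx> S"
  using card_of_Times_same_infinite eqpoll_iff_card_of_ordIso by blast

lemma ubiquitously_dense_Ioo_eqpoll:
  fixes S :: "real set"
  assumes "ubiquitously_dense (top_of_set {0..}) S" "0 \<le> a" "a < b"
  shows "{a<..<b} \<inter> S \<approx> S"
proof -
  have "openin (top_of_set {0..}) ({0..} \<inter> {a<..<b})"
    by (rule openin_open_Int) simp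
  moreover have "{0..} \<inter> {a<..<b} = {a<..<b}"
    using assms by auto
  ultimately show ?thesis
    using assms unfolding ubiquitously_dense_def by auto
qed

lemma ubiquitously_dense_infinite:
  fixes S :: "real set"
  assumes "ubiquitously_dense (top_of_set {0..}) S" "0 \<in> S"
  shows "infinite S"
proof
  assume "finite S"
  have "{0<..<1} \<inter> S \<approx> S"
    using ubiquitously_dense_Ioo_eqpoll[OF assms(1)] by simp
  then have "card ({0<..<1} \<inter> S) = card S"
    using \<open>finite S\<close> eqpoll_iff_card by (metis finite_Int)
  moreover have "{0<..<1} \<inter> S \<subset> S"
    using assms(2) by auto
  ultimately show False
    using \<open>finite S\<close> by (metis psubset_card_mono less_irrefl)
qed

lemma ubiquitously_dense_Times_lepoll_Ioo:
  fixes S :: "real set"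
  assumes "ubiquitously_dense (top_of_set {0..}) S" "0 \<in> S" "0 \<le> a" "a < b"
  shows "S \<times> S \<lesssim> {a<..<b} \<inter> S"
proof -
  have "S \<times> S \<approx> S"
    using Times_self_eqpoll ubiquitously_dense_infinite[OF assms(1,2)] .
  also have "S \<approx> {a<..<b} \<inter> S"
    using ubiquitously_dense_Ioo_eqpoll[OF assms(1,3,4)] by (rule eqpoll_sym)
  finally show ?thesis
    by (rule eqpoll_imp_lepoll)
qed

definition grid_cell :: "real \<Rightarrow> nat \<Rightarrow> real set" where
  "grid_cell w k = {real k * w <..< (real k + 1) * w}"

lemma grid_cell_unique:
  assumes "0 < w" "v \<in> grid_cell w k" "v \<in> grid_cell w l"
  shows "k = l"
proof -
  have "real k * w < (real l + 1) * w" "real l * w < (real k + 1) * w"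
    using assms(2,3) unfolding grid_cell_def by auto
  then have "real k < real l + 1" "real l < real k + 1"
    using mult_less_cancel_right_pos[OF assms(1)] by blast+
  then show ?thesis
    by linarith
qed

lemma grid_cell_ceiling_bounds:
  assumes "0 < w" "0 \<le> t" "v \<in> grid_cell w (nat \<lceil>t / w\<rceil>)"
  shows "t < v" "v < t + 2 * w"
proof -
  define k where "k = nat \<lceil>t / w\<rceil>"
  have k: "t / w \<le> real k" "real k < t / w + 1"
    using assms(1,2) unfolding k_def by (simp_all add: divide_nonneg_pos) linarith+
  have v: "real k * w < v" "v < (real k + 1) * w"
    using assms(3) unfolding k_def grid_cell_def by auto
  show "t < v"
    using k(1) v(1) assms(1) by (simp add: pos_divide_le_eq)
  have "(real k + 1) * w < (t / w + 2) * w"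
    using k(2) assms(1) by simp
  also have "\<dots> = t + 2 * w"
    using assms(1) by (simp add: field_simps)
  finally show "v < t + 2 * w"
    using v(2) by linarith
qed

lemma sorted_pair_eq_imp_doubleton_eq:
  fixes a b c d :: "'b :: linorder"
  assumes "(min a b, max a b) = (min c d, max c d)"
  shows "{a, b} = {c, d}"
  using assms by (auto simp: min_def max_def split: if_splits)

lemma exists_rigid_shift:
  fixes S :: "real set" and d :: "'a \<Rightarrow> 'a \<Rightarrow> real"
  assumes "ubiquitously_dense (top_of_set {0..}) S" "0 \<in> S" "T \<lesssim> S" "0 < \<delta>"
    and d: "\<And>x y. x \<in> T \<Longrightarrow> y \<in> T \<Longrightarrow> 0 \<le> d x y \<and> d x y = d y x"
  obtains e where
    "\<And>x y. x \<in> T \<Longrightarrow> y \<in> T \<Longrightarrow> e x y \<in> S \<and> e x y = e y x"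
    "\<And>x. e x x = 0"
    "\<And>x y. x \<in> T \<Longrightarrow> y \<in> T \<Longrightarrow> x \<noteq> y \<Longrightarrow> d x y + \<delta> < e x y \<and> e x y < d x y + 2 * \<delta>"
    "strongly_rigid T e"
proof -
  define w where "w = \<delta> / 3"
  have "0 < w"
    using assms(4) by (simp add: w_def)
  obtain g where g: "inj_on g T" "g ` T \<subseteq> S"
    using assms(3) unfolding lepoll_def by blast
  have "\<forall>k. \<exists>h. inj_on h (S \<times> S) \<and> h ` (S \<times> S) \<subseteq> grid_cell w k \<inter> S"
    using ubiquitously_dense_Times_lepoll_Ioo[OF assms(1,2)] \<open>0 < w\<close>
    unfolding lepoll_def grid_cell_def by simp
  then obtain h where h: "\<And>k. inj_on (h k) (S \<times> S)" "\<And>k. h k ` (S \<times> S) \<subseteq> grid_cell w k \<inter> S"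
    by metis
  define cell where "cell x y = nat \<lceil>(d x y + \<delta>) / w\<rceil>" for x y
  define code where "code x y = (min (g x) (g y), max (g x) (g y))" for x y
  define e where "e x y = (if x = y then 0 else h (cell x y) (code x y))" for x y
  have code: "code x y \<in> S \<times> S" if "x \<in> T" "y \<in> T" for x y
    using g(2) that unfolding code_def min_def max_def by auto
  have e_cell: "e x y \<in> grid_cell w (cell x y) \<inter> S" if "x \<in> T" "y \<in> T" "x \<noteq> y" for x y
    using h(2)[of "cell x y"] imageI[OF code[OF that(1,2)], of "h (cell x y)"] that(3)
    unfolding e_def by auto
  show thesis
  proof
    fix x y assume "x \<in> T" "y \<in> T"
    then show "e x y \<in> S \<and> e x y = e y x"
      using e_cell assms(2) d unfolding e_def cell_def code_def
      by (auto simp: min.commute max.commute)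
  next
    show "e x x = 0" for x
      by (simp add: e_def)
  next
    fix x y assume xy: "x \<in> T" "y \<in> T" "x \<noteq> y"
    have "d x y + \<delta> < e x y" "e x y < d x y + \<delta> + 2 * w"
      using grid_cell_ceiling_bounds[OF \<open>0 < w\<close> _ , of "d x y + \<delta>" "e x y"]
        e_cell[OF xy] d[OF xy(1,2)] assms(4) unfolding cell_def by auto
    then show "d x y + \<delta> < e x y \<and> e x y < d x y + 2 * \<delta>"
      using w_def assms(4) by linarith
  next
    have "{x, y} = {u, v}"
      if T: "x \<in> T" "y \<in> T" "u \<in> T" "v \<in> T" and eq: "e x y = e u v" and "e x y \<noteq> 0"
      for x y u v
    proof -
      have "x \<noteq> y" "u \<noteq> v"
        using eq \<open>e x y \<noteq> 0\<close> unfolding e_def by auto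
      have "e x y \<in> grid_cell w (cell x y)" "e x y \<in> grid_cell w (cell u v)"
        using e_cell[OF T(1,2) \<open>x \<noteq> y\<close>] e_cell[OF T(3,4) \<open>u \<noteq> v\<close>] eq by auto
      then have "cell x y = cell u v"
        by (rule grid_cell_unique[OF \<open>0 < w\<close>])
      then have "h (cell x y) (code x y) = h (cell x y) (code u v)"
        using eq \<open>x \<noteq> y\<close> \<open>u \<noteq> v\<close> unfolding e_def by simp
      then have "code x y = code u v"
        using inj_onD[OF h(1) _ code[OF T(1,2)] code[OF T(3,4)]] by blast
      then have "g ` {x, y} = g ` {u, v}"
        using sorted_pair_eq_imp_doubleton_eq unfolding code_def by auto
      then show "{x, y} = {u, v}"
        using inj_on_image_eq_iff[OF g(1), of "{x, y}" "{u, v}"] T by blast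
    qed
    then show "strongly_rigid T e"
      unfolding strongly_rigid_def by blast
  qed
qed

locale metric_shift =
  fixes T :: "'a set" and d e :: "'a \<Rightarrow> 'a \<Rightarrow> real" and \<delta> :: real
  assumes delta_pos: "0 < \<delta>"
    and d_nonneg: "x \<in> T \<Longrightarrow> y \<in> T \<Longrightarrow> 0 \<le> d x y"
    and d_refl: "x \<in> T \<Longrightarrow> d x x = 0"
    and d_triangle: "x \<in> T \<Longrightarrow> y \<in> T \<Longrightarrow> z \<in> T \<Longrightarrow> d x y \<le> d x z + d z y"
    and e_refl: "e x x = 0"
    and e_sym: "x \<in> T \<Longrightarrow> y \<in> T \<Longrightarrow> e x y = e y x"
    and shift: "x \<in> T \<Longrightarrow> y \<in> T \<Longrightarrow> x \<noteq> y \<Longrightarrow> d x y + \<delta> < e x y \<and> e x y < d x y + 2 * \<delta>"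
begin

lemma gap: "x \<in> T \<Longrightarrow> y \<in> T \<Longrightarrow> x \<noteq> y \<Longrightarrow> \<delta> < e x y"
  using shift d_nonneg by fastforce

lemma dist_le: "x \<in> T \<Longrightarrow> y \<in> T \<Longrightarrow> \<bar>d x y - e x y\<bar> \<le> 2 * \<delta>"
  using shift[of x y] d_refl[of x] e_refl[of x] delta_pos by (cases "x = y") auto

text \<open>The two shifts on the right-hand side outweigh the one on the left.\<close>

lemma strict_triangle:
  assumes "x \<in> T" "y \<in> T" "z \<in> T" "x \<noteq> z" "z \<noteq> y"
  shows "e x y < e x z + e z y"
proof (cases "x = y")
  case True
  then show ?thesis
    using gap[of x z] gap[of z y] e_refl delta_pos assms by simp
next
  case False
  have "e x y < d x y + 2 * \<delta>"
    using shift[of x y] False assms by blast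
  also have "\<dots> \<le> d x z + d z y + 2 * \<delta>"
    using d_triangle assms by simp
  also have "\<dots> < e x z + e z y"
    using shift[of x z] shift[of z y] assms by fastforce
  finally show ?thesis .
qed

lemma triangle: "x \<in> T \<Longrightarrow> y \<in> T \<Longrightarrow> z \<in> T \<Longrightarrow> e x y \<le> e x z + e z y"
  using strict_triangle[of x y z] e_refl by (cases "x = z \<or> z = y") (auto simp: less_imp_le)

lemma uniformly_discrete: "uniformly_discrete T e"
  unfolding uniformly_discrete_def using gap delta_pos by blast

lemma in_Met_discrete_topology:
  assumes "\<And>x y. x \<in> T \<Longrightarrow> y \<in> T \<Longrightarrow> e x y \<in> S"
  shows "e \<in> Met (discrete_topology T) S"
proof -
  have "\<exists>r>0. \<forall>y\<in>T. e x y < r \<longrightarrow> y \<in> U" if "x \<in> U" "U \<subseteq> T" for x U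
    using that gap delta_pos by (metis less_asym subsetD)
  moreover have "0 \<le> e x y \<and> (e x y = 0 \<longleftrightarrow> x = y)" if "x \<in> T" "y \<in> T" for x y
    using gap[OF that] e_refl delta_pos by (cases "x = y") auto
  ultimately show ?thesis
    unfolding Met_def using assms e_sym triangle by auto
qed

end

lemma metric_dist_sup_le:
  assumes "\<And>x y. x \<in> topspace X \<Longrightarrow> y \<in> topspace X \<Longrightarrow> \<bar>d x y - e x y\<bar> \<le> r"
  shows "metric_dist_sup X d e \<le> ereal r"
  unfolding metric_dist_sup_def using assms by (intro SUP_least) auto

theorem theorem2p5:
  fixes S :: "real set" and X :: "'a topology" and d :: "'a \<Rightarrow> 'a \<Rightarrow> real" and \<epsilon> :: real
  assumes "S \<subseteq> {0..}" and "0 \<in> S"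
    and "ubiquitously_dense (top_of_set {0..}) S"
    and "X = discrete_topology (topspace X)"
    and "topspace X \<lesssim> S"
    and "d \<in> Met X {0..}"
    and "0 < \<epsilon>"
  shows "\<exists>e \<in> Met X S.
           metric_dist_sup X d e \<le> ereal \<epsilon> \<and>
           uniformly_discrete (topspace X) e \<and>
           (\<forall>x\<in>topspace X. \<forall>y\<in>topspace X. \<forall>z\<in>topspace X.
              x \<noteq> y \<and> y \<noteq> z \<and> x \<noteq> z \<longrightarrow> e x y < e x z + e z y) \<and>
           strongly_rigid (topspace X) e"
proof -
  define T where "T = topspace X"
  define \<delta> where "\<delta> = \<epsilon> / 2"
  have "0 < \<delta>"
    using assms(7) by (simp add: \<delta>_def)
  have d: "\<And>x y. x \<in> T \<Longrightarrow> y \<in> T \<Longrightarrow> 0 \<le> d x y \<and> d x y = d y x"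
    and d_refl: "\<And>x. x \<in> T \<Longrightarrow> d x x = 0"
    and d_triangle: "\<And>x y z. x \<in> T \<Longrightarrow> y \<in> T \<Longrightarrow> z \<in> T \<Longrightarrow> d x y \<le> d x z + d z y"
    using assms(6) unfolding Met_def T_def by auto
  obtain e where e: "\<And>x y. x \<in> T \<Longrightarrow> y \<in> T \<Longrightarrow> e x y \<in> S \<and> e x y = e y x" "\<And>x. e x x = 0"
    and shift: "\<And>x y. x \<in> T \<Longrightarrow> y \<in> T \<Longrightarrow> x \<noteq> y \<Longrightarrow> d x y + \<delta> < e x y \<and> e x y < d x y + 2 * \<delta>"
    and "strongly_rigid T e"
    using exists_rigid_shift[where d = d, OF assms(3,2) assms(5)[folded T_def] \<open>0 < \<delta>\<close> d] by blast
  interpret metric_shift T d e \<delta>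
    using \<open>0 < \<delta>\<close> d d_refl d_triangle e shift by unfold_locales auto
  have "e \<in> Met X S"
    using in_Met_discrete_topology e(1) assms(4) unfolding T_def by metis
  moreover have "metric_dist_sup X d e \<le> ereal \<epsilon>"
    using dist_le unfolding T_def \<delta>_def by (intro metric_dist_sup_le) simp
  ultimately show ?thesis
    using strict_triangle uniformly_discrete \<open>strongly_rigid T e\<close> unfolding T_def by blast
qed

end
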